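(* Suppose $\mu>0$ satisfies $\mu/2\le v_{\max}<\mu$, where $v_{\max}$ is the largest value $v_i(S)$ over all bidders $i$ and $S\in\mathcal S_i$. Then the multiplicative price update algorithm with $p_0=\frac{\mu}{4bm}$ and $r=(4bm)^{1/b}$, run on truthful input, outputs an allocation $S$ in which every good is allocated at most $b$ times, and $$v(S)\ge\frac{\mathrm{OPT}}{2(b(r-1)+1)}\ge \frac{\mathrm{OPT}}{O(b\, m^{1/b})}.$$
   Context: Multi-unit combinatorial auction: a set $\mathsf U$ of $m$ goods, each available in $b\ge1$ copies; $n$ bidders, bidder $i$ having a collection $\mathcal S_i$ of $k$ nonempty subsets of $\mathsf U$ and valuation $v_i:\mathcal S_i\to\mathbb R_{\ge0}$, extended to all $T\subseteq\mathsf U$ by $v_i(T)=\max\{v_i(S'):S'\in\mathcal S_i, S'\subseteq T\}$ ($0$ if none). $v(S)=\sum_i v_i(S_i)$ and $\mathrm{OPT}$ is the maximum of $\sum_i v_i(T_i)$ over allocations in which every good belongs to at most $b$ sets. Multiplicative price update algorithm (parameters $p_0,r$): set $p_e^1=p_0$ for all goods $e$; for $i=1,\dots,n$ in a fixed order: let $S_i$ be a set maximizing $v_i(S)$ among $S\in\mathcal S_i$ with $v_i(S)\ge\sum_{e\in S}p_e^i$ ($S_i=\emptyset$ if none); set $p_e^{i+1}=r\,p_e^i$ for $e\in S_i$, $p_e^{i+1}=p_e^i$ otherwise; output $(S_1,\dots,S_n)$. *)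

theory Defs
  imports Complex_Main
begin

text \<open>Bidders are 0,...,n-1 (0-based); goods have type 'g and form the finite set U.
  Sc i is the collection of bundles of bidder i, v i its valuation on these bundles.\<close>

definition vext :: "(nat \<Rightarrow> 'g set set) \<Rightarrow> (nat \<Rightarrow> 'g set \<Rightarrow> real) \<Rightarrow> nat \<Rightarrow> 'g set \<Rightarrow> real" where
  "vext Sc v i T = (if {S'\<in>Sc i. S' \<subseteq> T} = {} then 0 else Max (v i ` {S'\<in>Sc i. S' \<subseteq> T}))"

definition welfare :: "nat \<Rightarrow> (nat \<Rightarrow> 'g set set) \<Rightarrow> (nat \<Rightarrow> 'g set \<Rightarrow> real) \<Rightarrow> (nat \<Rightarrow> 'g set) \<Rightarrow> real" where
  "welfare n Sc v T = (\<Sum>i<n. vext Sc v i (T i))"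

definition feasible_alloc :: "'g set \<Rightarrow> nat \<Rightarrow> nat \<Rightarrow> (nat \<Rightarrow> 'g set) \<Rightarrow> bool" where
  "feasible_alloc U b n T \<longleftrightarrow> (\<forall>i<n. T i \<subseteq> U) \<and> (\<forall>e\<in>U. card {i. i < n \<and> e \<in> T i} \<le> b)"

definition OPT :: "'g set \<Rightarrow> nat \<Rightarrow> nat \<Rightarrow> (nat \<Rightarrow> 'g set set) \<Rightarrow> (nat \<Rightarrow> 'g set \<Rightarrow> real) \<Rightarrow> real" where
  "OPT U b n Sc v = Sup {welfare n Sc v T | T. feasible_alloc U b n T}"

definition vmax :: "nat \<Rightarrow> (nat \<Rightarrow> 'g set set) \<Rightarrow> (nat \<Rightarrow> 'g set \<Rightarrow> real) \<Rightarrow> real" where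
  "vmax n Sc v = Max {v i S | i S. i < n \<and> S \<in> Sc i}"

fun mpu_price :: "real \<Rightarrow> real \<Rightarrow> (nat \<Rightarrow> 'g set) \<Rightarrow> nat \<Rightarrow> 'g \<Rightarrow> real" where
  "mpu_price p0 r S 0 e = p0"
| "mpu_price p0 r S (Suc i) e = (if e \<in> S i then r * mpu_price p0 r S i e else mpu_price p0 r S i e)"

definition affordable :: "(nat \<Rightarrow> 'g set set) \<Rightarrow> (nat \<Rightarrow> 'g set \<Rightarrow> real) \<Rightarrow> real \<Rightarrow> real \<Rightarrow> (nat \<Rightarrow> 'g set) \<Rightarrow> nat \<Rightarrow> 'g set set" where
  "affordable Sc v p0 r S i = {T \<in> Sc i. v i T \<ge> (\<Sum>e\<in>T. mpu_price p0 r S i e)}"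

text \<open>S is an output of the multiplicative price update algorithm (any tie-breaking).\<close>
definition mpu_run :: "nat \<Rightarrow> (nat \<Rightarrow> 'g set set) \<Rightarrow> (nat \<Rightarrow> 'g set \<Rightarrow> real) \<Rightarrow> real \<Rightarrow> real \<Rightarrow> (nat \<Rightarrow> 'g set) \<Rightarrow> bool" where
  "mpu_run n Sc v p0 r S \<longleftrightarrow> (\<forall>i<n.
      (if affordable Sc v p0 r S i = {} then S i = {}
       else S i \<in> affordable Sc v p0 r S i \<and> (\<forall>T\<in>affordable Sc v p0 r S i. v i T \<le> v i (S i))))"

end

theory Submission
  imports Defs
begin

text \<open>Prices grow by the factor r on each good a bidder takes, and a bidder only takes a bundle
  he can pay for, so the potential (the total price of all goods) grows by at most (r - 1) times
  the welfare collected. A good taken b times costs p0 r^b = \<mu>, more than any bundle is worth,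
  which gives feasibility. Every bundle was either affordable to its bidder, hence worth no more
  than what he got, or is worth less than its final price; summing over any feasible allocation,
  in which each good is used at most b times, bounds its welfare by the welfare of the output
  plus b times the final potential. The bidder of value vmax ensures that the initial potential
  m p0 = \<mu>/(4b) is covered by the welfare of the output.\<close>

lemma card_less_Suc_filter:
  "card {j. j < Suc i \<and> P j} = card {j. j < i \<and> P j} + (if P i then 1 else 0)"
proof (cases "P i")
  case True
  then have "{j. j < Suc i \<and> P j} = insert i {j. j < i \<and> P j}" by (auto simp: less_Suc_eq)
  then show ?thesis using True by simp
next
  case False
  then have "{j. j < Suc i \<and> P j} = {j. j < i \<and> P j}" by (auto simp: less_Suc_eq)
  then show ?thesis using False by simp
qed

lemma mpu_price_eq_power:
  "mpu_price p0 r S i e = p0 * r ^ card {j. j < i \<and> e \<in> S j}"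
  by (induction i) (simp_all add: card_less_Suc_filter)

lemma mpu_price_nonneg: "0 \<le> p0 \<Longrightarrow> 0 \<le> r \<Longrightarrow> 0 \<le> mpu_price p0 r S i e"
  by (simp add: mpu_price_eq_power)

lemma mpu_price_mono:
  assumes "0 \<le> p0" "1 \<le> r" "i \<le> j"
  shows "mpu_price p0 r S i e \<le> mpu_price p0 r S j e"
  using assms(3)
proof (induction rule: dec_induct)
  case (step j)
  have "0 \<le> mpu_price p0 r S j e" using assms(1,2) by (simp add: mpu_price_nonneg)
  then show ?case using step.IH assms(2) by (auto intro: order_trans mult_left_le_one_le
      simp: mult_le_cancel_right1)
qed simp

lemma sum_mpu_price_Suc:
  assumes "finite U" "S i \<subseteq> U"
  shows "(\<Sum>e\<in>U. mpu_price p0 r S (Suc i) e)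
    = (\<Sum>e\<in>U. mpu_price p0 r S i e) + (r - 1) * (\<Sum>e\<in>S i. mpu_price p0 r S i e)"
proof -
  have "(\<Sum>e\<in>U. mpu_price p0 r S (Suc i) e)
      = (\<Sum>e\<in>U. mpu_price p0 r S i e + (if e \<in> S i then (r - 1) * mpu_price p0 r S i e else 0))"
    by (rule sum.cong) (auto simp: algebra_simps)
  also have "\<dots> = (\<Sum>e\<in>U. mpu_price p0 r S i e) + (\<Sum>e\<in>U \<inter> S i. (r - 1) * mpu_price p0 r S i e)"
    using assms(1) by (simp add: sum.distrib sum.inter_restrict)
  also have "U \<inter> S i = S i" using assms(2) by auto
  finally show ?thesis by (simp add: sum_distrib_left)
qed

lemma sum_sum_eq_sum_card:
  fixes n :: nat
  assumes "finite U" "\<And>i. i < n \<Longrightarrow> T i \<subseteq> U"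
  shows "(\<Sum>i<n. \<Sum>e\<in>T i. f e) = (\<Sum>e\<in>U. f e * real (card {i. i < n \<and> e \<in> T i}))"
proof -
  have "(\<Sum>i<n. \<Sum>e\<in>T i. f e) = (\<Sum>i<n. \<Sum>e\<in>U. if e \<in> T i then f e else 0)"
  proof (rule sum.cong)
    fix i assume "i \<in> {..<n}"
    then have "U \<inter> T i = T i" using assms(2) by auto
    then show "(\<Sum>e\<in>T i. f e) = (\<Sum>e\<in>U. if e \<in> T i then f e else 0)"
      using sum.inter_restrict[OF assms(1), of f "T i"] by simp
  qed simp
  also have "\<dots> = (\<Sum>e\<in>U. \<Sum>i<n. if e \<in> T i then f e else 0)"
    by (rule sum.swap)
  also have "\<dots> = (\<Sum>e\<in>U. f e * real (card {i. i < n \<and> e \<in> T i}))"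
  proof (rule sum.cong)
    fix e
    show "(\<Sum>i<n. if e \<in> T i then f e else 0) = f e * real (card {i. i < n \<and> e \<in> T i})"
      by (simp add: sum.If_cases Int_def mult.commute conj_commute)
  qed simp
  finally show ?thesis .
qed

lemma vext_ge:
  assumes "finite (Sc i)" "T \<in> Sc i" "T \<subseteq> X"
  shows "v i T \<le> vext Sc v i X"
  using assms by (auto simp: vext_def intro!: Max_ge)

lemma vext_nonneg:
  assumes "finite (Sc i)" "\<And>T. T \<in> Sc i \<Longrightarrow> 0 \<le> v i T"
  shows "0 \<le> vext Sc v i X"
proof (cases "{T\<in>Sc i. T \<subseteq> X} = {}")
  case False
  then obtain T where "T \<in> Sc i" "T \<subseteq> X" by auto
  then show ?thesis using assms vext_ge[of Sc i T X v] by (meson order_trans)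
qed (simp add: vext_def)

lemma vext_attained:
  assumes "finite (Sc i)" "{T\<in>Sc i. T \<subseteq> X} \<noteq> {}"
  obtains T where "T \<in> Sc i" "T \<subseteq> X" "vext Sc v i X = v i T"
proof -
  have "Max (v i ` {T\<in>Sc i. T \<subseteq> X}) \<in> v i ` {T\<in>Sc i. T \<subseteq> X}"
    using assms by (intro Max_in) auto
  moreover have "vext Sc v i X = Max (v i ` {T\<in>Sc i. T \<subseteq> X})"
    unfolding vext_def using assms(2) by (rule if_not_P)
  ultimately show ?thesis using that by auto
qed

lemma finite_bundle_values:
  fixes n :: nat
  assumes "\<And>i. i < n \<Longrightarrow> finite (Sc i)"
  shows "finite {v i T | i T. i < n \<and> T \<in> Sc i}"
proof -
  have "{v i T | i T. i < n \<and> T \<in> Sc i} = (\<Union>i<n. v i ` Sc i)" by auto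
  then show ?thesis using assms by (auto intro!: finite_UN_I)
qed

lemma vmax_ge:
  fixes n :: nat
  assumes "\<And>i. i < n \<Longrightarrow> finite (Sc i)" "i < n" "T \<in> Sc i"
  shows "v i T \<le> vmax n Sc v"
  unfolding vmax_def using assms by (intro Max_ge finite_bundle_values) auto

lemma vmax_attained:
  fixes n :: nat
  assumes "\<And>i. i < n \<Longrightarrow> finite (Sc i)" "i < n" "T \<in> Sc i"
  obtains i0 T0 where "i0 < n" "T0 \<in> Sc i0" "v i0 T0 = vmax n Sc v"
proof -
  have "vmax n Sc v \<in> {v i T | i T. i < n \<and> T \<in> Sc i}"
    unfolding vmax_def using assms by (intro Max_in finite_bundle_values) auto
  then show ?thesis using that by auto
qed

lemma OPT_le:
  assumes "\<And>T. feasible_alloc U b n T \<Longrightarrow> welfare n Sc v T \<le> c"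
  shows "OPT U b n Sc v \<le> c"
  unfolding OPT_def
proof (rule cSup_least)
  have "feasible_alloc U b n (\<lambda>_. {})" unfolding feasible_alloc_def by simp
  then show "{welfare n Sc v T |T. feasible_alloc U b n T} \<noteq> {}" by blast
qed (use assms in blast)

locale mpu_outcome =
  fixes U :: "'g set" and n :: nat and Sc :: "nat \<Rightarrow> 'g set set"
    and v :: "nat \<Rightarrow> 'g set \<Rightarrow> real" and p0 r :: real and S :: "nat \<Rightarrow> 'g set"
  assumes finite_goods: "finite U"
    and finite_bundles: "\<And>i. i < n \<Longrightarrow> finite (Sc i)"
    and bundles_subset: "\<And>i T. i < n \<Longrightarrow> T \<in> Sc i \<Longrightarrow> T \<subseteq> U"
    and values_nonneg: "\<And>i T. i < n \<Longrightarrow> T \<in> Sc i \<Longrightarrow> 0 \<le> v i T"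
    and p0_nonneg: "0 \<le> p0"
    and r_ge_1: "1 \<le> r"
    and run: "mpu_run n Sc v p0 r S"
begin

abbreviation price :: "nat \<Rightarrow> 'g \<Rightarrow> real" where
  "price \<equiv> mpu_price p0 r S"

definition potential :: "nat \<Rightarrow> real" where
  "potential i = (\<Sum>e\<in>U. price i e)"

lemma price_nonneg: "0 \<le> price i e"
  using p0_nonneg r_ge_1 by (simp add: mpu_price_nonneg)

lemma price_mono: "i \<le> j \<Longrightarrow> price i e \<le> price j e"
  using p0_nonneg r_ge_1 by (rule mpu_price_mono)

lemma sum_price_mono:
  "i \<le> j \<Longrightarrow> finite Y \<Longrightarrow> X \<subseteq> Y \<Longrightarrow> (\<Sum>e\<in>X. price i e) \<le> (\<Sum>e\<in>Y. price j e)"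
  by (meson order_trans price_mono price_nonneg sum_mono sum_mono2)

lemma alloc_empty_if_unaffordable:
  "i < n \<Longrightarrow> affordable Sc v p0 r S i = {} \<Longrightarrow> S i = {}"
  using run unfolding mpu_run_def by auto

lemma alloc_affordable:
  "i < n \<Longrightarrow> affordable Sc v p0 r S i \<noteq> {} \<Longrightarrow> S i \<in> affordable Sc v p0 r S i"
  using run unfolding mpu_run_def by auto

lemma alloc_best:
  "i < n \<Longrightarrow> T \<in> affordable Sc v p0 r S i \<Longrightarrow> v i T \<le> v i (S i)"
  using run unfolding mpu_run_def by (metis empty_iff)

lemma alloc_subset: "i < n \<Longrightarrow> S i \<subseteq> U"
  using alloc_empty_if_unaffordable alloc_affordable bundles_subset
  unfolding affordable_def by blast

lemma bidder_vext_nonneg: "i < n \<Longrightarrow> 0 \<le> vext Sc v i X"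
  by (simp add: finite_bundles values_nonneg vext_nonneg)

lemma bundle_value_le_vext: "i < n \<Longrightarrow> T \<in> Sc i \<Longrightarrow> T \<subseteq> X \<Longrightarrow> v i T \<le> vext Sc v i X"
  by (simp add: finite_bundles vext_ge)

lemma sum_price_alloc_le_vext:
  assumes "i < n"
  shows "(\<Sum>e\<in>S i. price i e) \<le> vext Sc v i (S i)"
proof (cases "affordable Sc v p0 r S i = {}")
  case True
  then show ?thesis using assms alloc_empty_if_unaffordable bidder_vext_nonneg by simp
next
  case False
  with assms have "S i \<in> affordable Sc v p0 r S i" by (rule alloc_affordable)
  then show ?thesis using bundle_value_le_vext[OF assms, of "S i" "S i"] unfolding affordable_def by auto
qed

text \<open>The dichotomy behind the analysis: an affordable bundle is dominated by what its bidder
  received, an unaffordable one by its price, which only grows.\<close>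
lemma bundle_value_le_vext_or_price:
  assumes "i < n" "T \<in> Sc i"
  shows "v i T \<le> vext Sc v i (S i) \<or> v i T < (\<Sum>e\<in>T. price n e)"
proof (cases "T \<in> affordable Sc v p0 r S i")
  case True
  then have "S i \<in> Sc i" using assms(1) alloc_affordable unfolding affordable_def by blast
  then have "v i (S i) \<le> vext Sc v i (S i)" using assms(1) bundle_value_le_vext by blast
  then show ?thesis using True assms(1) alloc_best by fastforce
next
  case False
  then have "v i T < (\<Sum>e\<in>T. price i e)" using assms(2) unfolding affordable_def by auto
  also have "\<dots> \<le> (\<Sum>e\<in>T. price n e)"
    using assms finite_subset[OF bundles_subset finite_goods] by (intro sum_price_mono) auto
  finally show ?thesis ..
qed

lemma vext_le_vext_alloc_plus_price:
  assumes "i < n" "X \<subseteq> U"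
  shows "vext Sc v i X \<le> vext Sc v i (S i) + (\<Sum>e\<in>X. price n e)"
proof (cases "{T\<in>Sc i. T \<subseteq> X} = {}")
  case True
  then show ?thesis using assms(1) bidder_vext_nonneg by (simp add: vext_def sum_nonneg price_nonneg)
next
  case False
  then obtain T where T: "T \<in> Sc i" "T \<subseteq> X" "vext Sc v i X = v i T"
    using vext_attained finite_bundles assms(1) by metis
  have "(\<Sum>e\<in>T. price n e) \<le> (\<Sum>e\<in>X. price n e)"
    using T(2) assms(2) finite_subset[OF _ finite_goods] by (intro sum_price_mono) auto
  then show ?thesis
    using T bundle_value_le_vext_or_price[OF assms(1) T(1)] bidder_vext_nonneg[OF assms(1)]
      sum_nonneg[of X "price n", OF price_nonneg] by (smt (verit))
qed

lemma potential_le: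
  "i \<le> n \<Longrightarrow> potential i \<le> card U * p0 + (r - 1) * (\<Sum>j<i. vext Sc v j (S j))"
proof (induction i)
  case (Suc i)
  then have "i < n" by simp
  have "potential (Suc i) = potential i + (r - 1) * (\<Sum>e\<in>S i. price i e)"
    unfolding potential_def using finite_goods alloc_subset[OF \<open>i < n\<close>] by (rule sum_mpu_price_Suc)
  also have "\<dots> \<le> potential i + (r - 1) * vext Sc v i (S i)"
    using sum_price_alloc_le_vext[OF \<open>i < n\<close>] r_ge_1 by (simp add: mult_left_mono)
  finally show ?case using Suc by (simp add: algebra_simps)
qed (simp add: potential_def)

lemma final_potential_le: "potential n \<le> card U * p0 + (r - 1) * welfare n Sc v S"
  using potential_le[of n] unfolding welfare_def by simp

lemma welfare_nonneg: "0 \<le> welfare n Sc v S"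
  unfolding welfare_def by (intro sum_nonneg) (simp add: bidder_vext_nonneg)

lemma welfare_le_welfare_alloc_plus_potential:
  assumes "feasible_alloc U b n T"
  shows "welfare n Sc v T \<le> welfare n Sc v S + b * potential n"
proof -
  have TU: "\<And>i. i < n \<Longrightarrow> T i \<subseteq> U" and Tb: "\<And>e. e \<in> U \<Longrightarrow> card {i. i < n \<and> e \<in> T i} \<le> b"
    using assms unfolding feasible_alloc_def by auto
  have "welfare n Sc v T \<le> (\<Sum>i<n. vext Sc v i (S i) + (\<Sum>e\<in>T i. price n e))"
    unfolding welfare_def using TU by (intro sum_mono vext_le_vext_alloc_plus_price) auto
  also have "\<dots> = welfare n Sc v S + (\<Sum>e\<in>U. price n e * card {i. i < n \<and> e \<in> T i})"
    unfolding welfare_def sum.distrib using sum_sum_eq_sum_card[OF finite_goods TU] by simp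
  also have "\<dots> \<le> welfare n Sc v S + (\<Sum>e\<in>U. price n e * b)"
    using Tb by (intro add_left_mono sum_mono mult_left_mono price_nonneg) auto
  finally show ?thesis by (simp add: potential_def sum_distrib_left mult.commute)
qed

text \<open>A good already taken b times costs p0 r^b, so no affordable bundle contains it.\<close>
lemma feasible_alloc_if_priced_out:
  assumes "\<And>i T. i < n \<Longrightarrow> T \<in> Sc i \<Longrightarrow> v i T < p0 * r ^ b"
  shows "feasible_alloc U b n S"
proof -
  have "card {j. j < i \<and> e \<in> S j} \<le> b" if "i \<le> n" for i e
    using that
  proof (induction i)
    case (Suc i)
    then have "i < n" by simp
    have "card {j. j < i \<and> e \<in> S j} \<noteq> b" if "e \<in> S i"
    proof
      assume full: "card {j. j < i \<and> e \<in> S j} = b"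
      have "S i \<in> affordable Sc v p0 r S i"
        using alloc_empty_if_unaffordable alloc_affordable \<open>i < n\<close> that by blast
      then have Si: "S i \<in> Sc i" "(\<Sum>e\<in>S i. price i e) \<le> v i (S i)"
        unfolding affordable_def by auto
      have "p0 * r ^ b = price i e" by (simp add: mpu_price_eq_power full)
      also have "\<dots> \<le> (\<Sum>e\<in>S i. price i e)"
        using that finite_subset[OF alloc_subset[OF \<open>i < n\<close>] finite_goods]
        by (intro member_le_sum price_nonneg)
      finally show False using Si assms[OF \<open>i < n\<close> Si(1)] by simp
    qed
    then show ?case using Suc by (auto simp: card_less_Suc_filter)
  qed simp
  then show ?thesis using alloc_subset by (simp add: feasible_alloc_def)
qed

text \<open>The bidder of a bundle worth at least 2 b m p0 pays for the initial potential m p0: either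
  that bundle was affordable, or its value is below the final potential.\<close>
lemma initial_potential_le_welfare:
  assumes "i0 < n" "T0 \<in> Sc i0" "2 * b * card U * p0 \<le> v i0 T0"
  shows "b * (card U * p0) \<le> (b * (r - 1) + 1) * welfare n Sc v S"
proof -
  define W where "W = welfare n Sc v S"
  define q where "q = card U * p0"
  have "W \<ge> 0" unfolding W_def by (rule welfare_nonneg)
  have "q \<ge> 0" unfolding q_def using p0_nonneg by simp
  show ?thesis
  proof (cases "v i0 T0 \<le> vext Sc v i0 (S i0)")
    case True
    have "vext Sc v i0 (S i0) \<le> W"
      unfolding W_def welfare_def using assms(1) bidder_vext_nonneg by (intro member_le_sum) auto
    then have "2 * (b * q) \<le> W" using True assms(3) unfolding q_def by (simp add: mult.assoc)
    moreover have "0 \<le> b * q" "0 \<le> b * (r - 1) * W" using \<open>q \<ge> 0\<close> r_ge_1 \<open>W \<ge> 0\<close> by simp_all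
    ultimately show ?thesis unfolding W_def q_def[symmetric] by (simp add: algebra_simps)
  next
    case False
    then have "v i0 T0 < (\<Sum>e\<in>T0. price n e)"
      using bundle_value_le_vext_or_price[OF assms(1,2)] by simp
    also have "\<dots> \<le> potential n"
      unfolding potential_def using bundles_subset[OF assms(1,2)] finite_goods
      by (intro sum_price_mono) auto
    finally have "2 * (b * q) \<le> q + (r - 1) * W"
      using assms(3) final_potential_le unfolding q_def W_def by (simp add: mult.assoc)
    show ?thesis
    proof (cases "b = 0")
      case False
      then have "q \<le> b * q" using mult_right_mono[of 1 "real b" q] \<open>q \<ge> 0\<close> by simp
      moreover have "(r - 1) * W \<le> b * ((r - 1) * W)"
        using mult_right_mono[of 1 "real b" "(r - 1) * W"] False r_ge_1 \<open>W \<ge> 0\<close> by simp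
      ultimately show ?thesis
        using \<open>2 * (b * q) \<le> q + (r - 1) * W\<close> \<open>W \<ge> 0\<close> unfolding W_def q_def[symmetric]
        by (simp add: algebra_simps)
    qed (use \<open>W \<ge> 0\<close> W_def in simp)
  qed
qed

lemma OPT_div_le_welfare:
  assumes "i0 < n" "T0 \<in> Sc i0" "2 * b * card U * p0 \<le> v i0 T0"
  shows "OPT U b n Sc v / (2 * (b * (r - 1) + 1)) \<le> welfare n Sc v S"
proof -
  have "OPT U b n Sc v \<le> 2 * (b * (r - 1) + 1) * welfare n Sc v S"
  proof (rule OPT_le)
    fix T assume "feasible_alloc U b n T"
    then have "welfare n Sc v T \<le> welfare n Sc v S + b * potential n"
      by (rule welfare_le_welfare_alloc_plus_potential)
    also have "\<dots> \<le> welfare n Sc v S + b * (card U * p0 + (r - 1) * welfare n Sc v S)"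
      using final_potential_le by (simp add: mult_left_mono)
    finally show "welfare n Sc v T \<le> 2 * (b * (r - 1) + 1) * welfare n Sc v S"
      using initial_potential_le_welfare[OF assms] by (simp add: algebra_simps)
  qed
  moreover have "0 < 2 * (b * (r - 1) + 1)" using r_ge_1 by (simp add: add_nonneg_pos)
  ultimately show ?thesis by (simp add: pos_divide_le_eq mult.commute)
qed

end

lemma four_mul_powr_inverse_le:
  assumes "b \<ge> 1"
  shows "(4 * real b) powr (1 / b) \<le> 4"
proof -
  have "4 * b \<le> (4::nat) ^ b"
    using assms by (induction b rule: nat_induct_at_least) simp_all
  then have "4 * real b \<le> 4 ^ b"
    by (metis of_nat_le_iff of_nat_mult of_nat_numeral of_nat_power)
  then have "(4 * real b) powr (1 / b) \<le> (4 ^ b) powr (1 / b)"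
    by (intro powr_mono2) simp_all
  also have "(4 ^ b :: real) powr (1 / b) = 4"
    using assms by (simp add: powr_realpow[symmetric] powr_powr)
  finally show ?thesis .
qed

lemma approximation_factor_le:
  fixes b m :: nat
  assumes "b \<ge> 1"
  shows "2 * (b * ((4 * b * m) powr (1 / b) - 1) + 1) \<le> 8 * b * m powr (1 / b)"
proof -
  have "2 * (b * ((4 * b * m) powr (1 / b) - 1) + 1) \<le> 2 * (b * (4 * b * m) powr (1 / b))"
    using assms by (simp add: algebra_simps)
  also have "\<dots> \<le> 2 * (b * (4 * m powr (1 / b)))"
    using four_mul_powr_inverse_le[OF assms]
    by (intro mult_left_mono) (simp_all add: powr_mult mult_right_mono)
  finally show ?thesis by simp
qed

lemma update_factor_ge_1:
  fixes b m :: nat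
  assumes "b \<ge> 1" "m \<ge> 1"
  shows "1 \<le> real (4 * b * m) powr (1 / b)"
proof -
  have "1 \<le> 4 * b * m" using assms by simp
  then show ?thesis by (simp add: ge_one_powr_ge_zero del: of_nat_mult)
qed

lemma initial_price_mul_update_factor_power:
  fixes b m :: nat
  assumes "b \<ge> 1" "m \<ge> 1"
  shows "\<mu> / real (4 * b * m) * (real (4 * b * m) powr (1 / b)) ^ b = \<mu>"
proof -
  have "0 < real (4 * b * m) powr (1 / b)" using update_factor_ge_1[OF assms] by linarith
  then have "(real (4 * b * m) powr (1 / b)) ^ b = (real (4 * b * m) powr (1 / b)) powr b"
    by (simp add: powr_realpow)
  also have "\<dots> = real (4 * b * m)"
    using assms by (simp add: powr_powr)
  finally show ?thesis using assms by simp
qed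

theorem theorem3:
  fixes U :: "'g set" and m b n k :: nat and Sc :: "nat \<Rightarrow> 'g set set"
    and v :: "nat \<Rightarrow> 'g set \<Rightarrow> real" and \<mu> :: real and S :: "nat \<Rightarrow> 'g set"
  assumes "finite U" and "card U = m" and "b \<ge> 1" and "n \<ge> 1" and "k \<ge> 1"
    and "\<And>i. i < n \<Longrightarrow> finite (Sc i) \<and> card (Sc i) = k"
    and "\<And>i S'. i < n \<Longrightarrow> S' \<in> Sc i \<Longrightarrow> S' \<noteq> {} \<and> S' \<subseteq> U"
    and "\<And>i S'. i < n \<Longrightarrow> S' \<in> Sc i \<Longrightarrow> v i S' \<ge> 0"
    and "\<mu> > 0" and "\<mu> / 2 \<le> vmax n Sc v" and "vmax n Sc v < \<mu>"
    and "mpu_run n Sc v (\<mu> / (4 * b * m)) ((4 * b * m) powr (1 / b)) S"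
  shows "feasible_alloc U b n S
    \<and> welfare n Sc v S \<ge> OPT U b n Sc v / (2 * (b * ((4 * b * m) powr (1 / b) - 1) + 1))
    \<and> 2 * (b * ((4 * b * m) powr (1 / b) - 1) + 1) \<le> 8 * b * m powr (1 / b)"
proof -
  define p0 where "p0 = \<mu> / (4 * b * m)"
  define r where "r = (4 * b * m) powr (1 / b)"
  have finite_Sc: "\<And>i. i < n \<Longrightarrow> finite (Sc i)" using assms(6) by blast
  obtain T where T: "T \<in> Sc 0" using assms(4,5) assms(6)[of 0] by fastforce
  then have "m \<ge> 1" using assms(1,2,4) assms(7)[of 0 T] by (auto simp: Suc_le_eq card_gt_0_iff)
  interpret mpu_outcome U n Sc v p0 r S
    using assms(1,7-9,12) finite_Sc update_factor_ge_1[OF assms(3) \<open>m \<ge> 1\<close>]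
    unfolding p0_def r_def by unfold_locales auto
  have "feasible_alloc U b n S"
  proof (rule feasible_alloc_if_priced_out)
    fix i T assume "i < n" "T \<in> Sc i"
    then have "v i T \<le> vmax n Sc v" using finite_Sc by (intro vmax_ge)
    then show "v i T < p0 * r ^ b"
      using assms(11) initial_price_mul_update_factor_power[OF assms(3) \<open>m \<ge> 1\<close>]
      unfolding p0_def r_def by simp
  qed
  moreover obtain i0 T0 where "i0 < n" "T0 \<in> Sc i0" "v i0 T0 = vmax n Sc v"
    using vmax_attained[of n Sc 0 T v] finite_Sc T assms(4) by auto
  moreover have "2 * b * card U * p0 = \<mu> / 2"
    unfolding p0_def using assms(2,3) \<open>m \<ge> 1\<close> by simp
  ultimately show ?thesis
    using OPT_div_le_welfare[of i0 T0 b] assms(10) approximation_factor_le[OF assms(3)]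
    unfolding r_def by simp
qed

end
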